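(* Let $\rho=\sum_{i=0}^n\lambda_i|D_n^i\rangle\langle D_n^i|$ with $\lambda_i\ge0$, $\sum_i\lambda_i=1$. If $n\ge2$, then $\rho_{[2]}$ is PPT if and only if $$\Big[\sum_{i=0}^n(n-i)(n-i-1)\lambda_i\Big]\Big[\sum_{i=0}^n i(i-1)\lambda_i\Big]-\Big[\sum_{i=0}^n i(n-i)\lambda_i\Big]^2\ge0.$$ If $n\ge3$, then $\rho_{[3]}$ is PPT if and only if both $$\Big[\sum_{i=0}^n(n-i)(n-i-1)(n-i-2)\lambda_i\Big]\Big[\sum_{i=0}^n i(i-1)(n-i)\lambda_i\Big]-\Big[\sum_{i=0}^n i(n-i)(n-i-1)\lambda_i\Big]^2\ge0$$ and $$\Big[\sum_{i=0}^n i(n-i)(n-i-1)\lambda_i\Big]\Big[\sum_{i=0}^n i(i-1)(i-2)\lambda_i\Big]-\Big[\sum_{i=0}^n i(i-1)(n-i)\lambda_i\Big]^2\ge0.$$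
   Context: $\rho_{[k]}$ denotes the partial trace of $\rho$ over qubits $k+1,\dots,n$. Dicke states: $|D_n^i\rangle=\binom{n}{i}^{-1/2}\sum_{s\in\{0,1\}^n,\ \sum_js_j=i}|s_1\rangle\otimes\cdots\otimes|s_n\rangle$. An $m$-qubit state whose range lies in the subspace of vectors invariant under swapping any two qubits (a symmetric state) is called PPT if its partial transpose with respect to $\lfloor m/2\rfloor$ of its qubits is positive semidefinite. *)

theory Defs
  imports Complex_Main
begin

text \<open>Computational basis of m qubits: bit strings of length m (True = |1>).
  Operators on m qubits are functions on pairs of bit strings (matrix entries).\<close>

definition bits :: "nat \<Rightarrow> bool list set" where
  "bits m = {s. length s = m}"

definition dicke :: "nat \<Rightarrow> nat \<Rightarrow> bool list \<Rightarrow> complex" where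
  "dicke n i s = (if length s = n \<and> length (filter id s) = i
                  then complex_of_real (1 / sqrt (real (n choose i))) else 0)"

definition dicke_mixture :: "nat \<Rightarrow> (nat \<Rightarrow> real) \<Rightarrow> bool list \<Rightarrow> bool list \<Rightarrow> complex" where
  "dicke_mixture n lam s t = (\<Sum>i = 0..n. complex_of_real (lam i) * dicke n i s * cnj (dicke n i t))"

definition ptrace :: "nat \<Rightarrow> nat \<Rightarrow> (bool list \<Rightarrow> bool list \<Rightarrow> complex) \<Rightarrow> bool list \<Rightarrow> bool list \<Rightarrow> complex" where
  "ptrace n k \<rho> s t = (\<Sum>u \<in> bits (n - k). \<rho> (s @ u) (t @ u))"

text \<open>Partial transpose with respect to the first j qubits.\<close>
definition ptranspose :: "nat \<Rightarrow> (bool list \<Rightarrow> bool list \<Rightarrow> complex) \<Rightarrow> bool list \<Rightarrow> bool list \<Rightarrow> complex" where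
  "ptranspose j \<sigma> s t = \<sigma> (take j t @ drop j s) (take j s @ drop j t)"

definition psd :: "nat \<Rightarrow> (bool list \<Rightarrow> bool list \<Rightarrow> complex) \<Rightarrow> bool" where
  "psd m M \<longleftrightarrow> (\<forall>v :: bool list \<Rightarrow> complex.
     let q = (\<Sum>s \<in> bits m. \<Sum>t \<in> bits m. cnj (v s) * M s t * v t) in Im q = 0 \<and> Re q \<ge> 0)"

text \<open>PPT for (symmetric) m-qubit states: partial transpose w.r.t. floor(m/2) qubits is PSD.\<close>
definition PPT :: "nat \<Rightarrow> (bool list \<Rightarrow> bool list \<Rightarrow> complex) \<Rightarrow> bool" where
  "PPT m \<sigma> \<longleftrightarrow> psd m (ptranspose (m div 2) \<sigma>)"

end

theory Submission
  imports Defs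
begin

text \<open>Tracing out all but k qubits of the Dicke mixture leaves an operator that is diagonal in
  the Hamming weight: between two basis strings of weight w its entry is
  a(w) = sum_i lambda_i C(n-k, i-w) / C(n, i) = sum_i lambda_i i^(w) (n-i)^(k-w) / n^(k),
  where x^(j) is the falling factorial. Transposing the first qubit moves these entries into
  2x2 blocks [[a(w), a(w+1)], [a(w+1), a(w+2)]] (one block for k = 2, two for k = 3) next to
  nonnegative diagonal entries, so the partial transpose is positive semidefinite iff
  a(w+1)^2 <= a(w) a(w+2) for these w. Clearing the common denominator n^(k) gives the
  stated inequalities.\<close>

definition weight :: "bool list \<Rightarrow> nat" where
  "weight s = length (filter id s)"

lemma weight_simps [simp]:
  "weight [] = 0"
  "weight (b # s) = (if b then Suc (weight s) else weight s)"
  "weight (s @ t) = weight s + weight t"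
  by (auto simp: weight_def)

lemma finite_bits [simp]: "finite (bits m)"
proof -
  have "finite {xs. set xs \<subseteq> (UNIV :: bool set) \<and> length xs = m}"
    by (rule finite_lists_length_eq) simp
  then show ?thesis by (simp add: bits_def)
qed

lemma card_bits_weight: "card {u \<in> bits m. weight u = j} = m choose j"
proof (induction m arbitrary: j)
  case 0
  have "{u \<in> bits 0. weight u = j} = (if j = 0 then {[]} else {})"
    by (auto simp: bits_def)
  then show ?case by simp
next
  case (Suc m)
  let ?ones = "{u \<in> bits m. weight u = j - 1 \<and> j \<ge> 1}" and ?zeros = "{u \<in> bits m. weight u = j}"
  have split_first: "{u \<in> bits (Suc m). weight u = j} = Cons True ` ?ones \<union> Cons False ` ?zeros"
    by (auto simp: bits_def length_Suc_conv image_iff split: if_splits)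
  have "card {u \<in> bits (Suc m). weight u = j} = card ?ones + card ?zeros"
    unfolding split_first by (subst card_Un_disjoint) (auto simp: card_image)
  moreover have "card ?ones = (if j \<ge> 1 then m choose (j - 1) else 0)"
    using Suc.IH[of "j - 1"] by auto
  ultimately show ?case
    using Suc.IH[of j] by (cases j) auto
qed

lemma card_bits_weight_shift:
  "card {u \<in> bits m. w + weight u = i} = (if w \<le> i then m choose (i - w) else 0)"
proof -
  have "{u \<in> bits m. w + weight u = i} = (if w \<le> i then {u \<in> bits m. weight u = i - w} else {})"
    by auto
  then show ?thesis by (simp add: card_bits_weight)
qed

fun falling_fact :: "real \<Rightarrow> nat \<Rightarrow> real" where
  "falling_fact x 0 = 1"
| "falling_fact x (Suc k) = x * falling_fact (x - 1) k"

lemma falling_fact_of_nat: "falling_fact (real m) w = fact w * real (m choose w)"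
proof (induction w arbitrary: m)
  case 0
  then show ?case by simp
next
  case (Suc w)
  show ?case
  proof (cases m)
    case 0
    then show ?thesis by simp
  next
    case (Suc m')
    have "falling_fact (real m) (Suc w) = real m * (fact w * real (m' choose w))"
      using Suc.IH[of m'] Suc by simp
    also have "\<dots> = fact w * real (Suc w * (m choose Suc w))"
      unfolding Suc Suc_times_binomial by (simp add: algebra_simps)
    finally show ?thesis by (simp add: algebra_simps)
  qed
qed

lemma choose_mult_commute: "(m choose a) * ((m - a) choose b) = (m choose b) * ((m - b) choose a)"
proof (cases "a + b \<le> m")
  case True
  have "(m choose (a + b)) * ((a + b) choose a) = (m choose a) * ((m - a) choose b)"
    using choose_mult[of a "a + b" m] True by simp
  moreover have "(m choose (a + b)) * ((a + b) choose b) = (m choose b) * ((m - b) choose a)"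
    using choose_mult[of b "a + b" m] True by simp
  ultimately show ?thesis
    by (metis binomial_symmetric le_add2 add_diff_cancel_right')
next
  case False
  then have "m choose a = 0 \<or> (m - a) choose b = 0" "m choose b = 0 \<or> (m - b) choose a = 0"
    by auto
  then show ?thesis by (metis mult_0 mult_0_right)
qed

lemma choose_mult_triple:
  assumes "w \<le> i" "i \<le> n" "w \<le> k" "k \<le> n"
  shows "(n choose i) * (i choose w) * ((n - i) choose (k - w))
       = (n choose k) * (k choose w) * ((n - k) choose (i - w))"
proof -
  have "(n choose i) * (i choose w) * ((n - i) choose (k - w))
      = (n choose w) * (((n - w) choose (i - w)) * (((n - w) - (i - w)) choose (k - w)))"
    using assms by (simp add: choose_mult)
  also have "\<dots> = (n choose w) * ((n - w) choose (k - w)) * (((n - w) - (k - w)) choose (i - w))"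
    by (simp only: choose_mult_commute mult.assoc)
  also have "\<dots> = (n choose k) * (k choose w) * ((n - k) choose (i - w))"
    using assms by (simp add: choose_mult)
  finally show ?thesis .
qed

lemma falling_fact_mult_choose:
  assumes "w \<le> i" "i \<le> n" "w \<le> k" "k \<le> n"
  shows "falling_fact (real i) w * falling_fact (real (n - i)) (k - w) * real (n choose i)
       = falling_fact (real n) k * real ((n - k) choose (i - w))"
proof -
  have "falling_fact (real i) w * falling_fact (real (n - i)) (k - w) * real (n choose i)
      = fact w * fact (k - w) * real ((n choose i) * (i choose w) * ((n - i) choose (k - w)))"
    by (simp add: falling_fact_of_nat)
  also have "\<dots> = real (fact w * fact (k - w) * (k choose w)) * real ((n choose k) * ((n - k) choose (i - w)))"
    unfolding choose_mult_triple[OF assms] by simp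
  also have "\<dots> = falling_fact (real n) k * real ((n - k) choose (i - w))"
    using assms by (simp add: binomial_fact_lemma falling_fact_of_nat)
  finally show ?thesis .
qed

lemma dicke_append:
  "length x + length u = n \<Longrightarrow>
     dicke n i (x @ u) = (if weight x + weight u = i then of_real (1 / sqrt (real (n choose i))) else 0)"
  by (simp add: dicke_def weight_def)

definition weight_diagonal :: "nat \<Rightarrow> (bool list \<Rightarrow> bool list \<Rightarrow> complex) \<Rightarrow> (nat \<Rightarrow> real) \<Rightarrow> bool" where
  "weight_diagonal m \<sigma> a \<longleftrightarrow>
     (\<forall>s \<in> bits m. \<forall>t \<in> bits m. \<sigma> s t = (if weight s = weight t then of_real (a (weight s)) else 0))"

lemma weight_diagonal_ptrace_dicke_mixture:
  assumes "k \<le> n"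
  shows "weight_diagonal k (ptrace n k (dicke_mixture n lam))
           (\<lambda>w. \<Sum>i = 0..n. lam i * (if w \<le> i then real ((n - k) choose (i - w)) else 0) / real (n choose i))"
  unfolding weight_diagonal_def
proof (intro ballI)
  fix s t assume "s \<in> bits k" "t \<in> bits k"
  then have len: "length s = k" "length t = k" by (auto simp: bits_def)
  have amplitude_square: "of_real (1 / sqrt c) * cnj (of_real (1 / sqrt c)) = (of_real (1 / c) :: complex)"
    if "c \<ge> 0" for c :: real
    using that by (simp flip: of_real_mult)
  have sqrt_square: "of_real (sqrt (real m)) * of_real (sqrt (real m)) = (of_nat m :: complex)" for m
    by (simp flip: of_real_mult)
  have "ptrace n k (dicke_mixture n lam) s t =
     (\<Sum>u \<in> bits (n - k). \<Sum>i = 0..n. of_real (lam i) *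
        (if weight s + weight u = i \<and> weight t + weight u = i then of_real (1 / real (n choose i)) else 0))"
    unfolding ptrace_def dicke_mixture_def
    by (intro sum.cong refl) (auto simp: dicke_append len assms bits_def amplitude_square sqrt_square)
  also have "\<dots> = (if weight s = weight t then of_real (\<Sum>i = 0..n. lam i *
      (if weight s \<le> i then real ((n - k) choose (i - weight s)) else 0) / real (n choose i)) else 0)"
  proof (cases "weight s = weight t")
    case True
    have "(\<Sum>u \<in> bits (n - k). \<Sum>i = 0..n. of_real (lam i) *
        (if weight s + weight u = i \<and> weight t + weight u = i then of_real (1 / real (n choose i)) else 0))
      = (\<Sum>i = 0..n. \<Sum>u \<in> bits (n - k).
          if weight s + weight u = i then of_real (lam i / real (n choose i)) else (0 :: complex))"
      using True by (subst sum.swap) (auto intro!: sum.cong)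
    also have "\<dots> = (\<Sum>i = 0..n. of_nat (card {u \<in> bits (n - k). weight s + weight u = i})
                                 * of_real (lam i / real (n choose i)))"
      by (intro sum.cong refl) (simp add: sum.If_cases Int_def conj_commute)
    also have "\<dots> = of_real (\<Sum>i = 0..n. lam i *
        (if weight s \<le> i then real ((n - k) choose (i - weight s)) else 0) / real (n choose i))"
      unfolding card_bits_weight_shift of_real_sum by (intro sum.cong refl) simp
    finally show ?thesis
      using True by simp
  next
    case False
    then show ?thesis by (auto intro!: sum.neutral)
  qed
  finally show "ptrace n k (dicke_mixture n lam) s t = (if weight s = weight t then of_real
      (\<Sum>i = 0..n. lam i * (if weight s \<le> i then real ((n - k) choose (i - weight s)) else 0)
                     / real (n choose i)) else 0)" .
qed

definition dicke_moment :: "nat \<Rightarrow> nat \<Rightarrow> (nat \<Rightarrow> real) \<Rightarrow> nat \<Rightarrow> real" where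
  "dicke_moment n k lam w = (\<Sum>i = 0..n. falling_fact (real i) w * falling_fact (real n - real i) (k - w) * lam i)"

lemma dicke_moment_nonneg:
  assumes "\<And>i. i \<le> n \<Longrightarrow> lam i \<ge> 0"
  shows "dicke_moment n k lam w \<ge> 0"
  unfolding dicke_moment_def
proof (intro sum_nonneg)
  fix i assume "i \<in> {0..n}"
  then have diff: "real n - real i = real (n - i)" and "lam i \<ge> 0"
    using assms by (auto simp: of_nat_diff)
  then show "falling_fact (real i) w * falling_fact (real n - real i) (k - w) * lam i \<ge> 0"
    unfolding diff falling_fact_of_nat by simp
qed

lemma dicke_marginal_coefficient:
  assumes "w \<le> k" "k \<le> n"
  shows "(\<Sum>i = 0..n. lam i * (if w \<le> i then real ((n - k) choose (i - w)) else 0) / real (n choose i))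
       = dicke_moment n k lam w / falling_fact (real n) k"
  unfolding dicke_moment_def sum_divide_distrib
proof (intro sum.cong refl)
  fix i assume "i \<in> {0..n}"
  then have i: "i \<le> n" "real n - real i = real (n - i)" by (auto simp: of_nat_diff)
  have F: "falling_fact (real n) k > 0" and "real (n choose i) > 0"
    using assms i(1) by (auto simp: falling_fact_of_nat)
  show "lam i * (if w \<le> i then real ((n - k) choose (i - w)) else 0) / real (n choose i)
      = falling_fact (real i) w * falling_fact (real n - real i) (k - w) * lam i / falling_fact (real n) k"
  proof (cases "w \<le> i")
    case True
    have "real ((n - k) choose (i - w))
        = falling_fact (real i) w * falling_fact (real (n - i)) (k - w) * real (n choose i) / falling_fact (real n) k"
      using falling_fact_mult_choose[OF True i(1) assms] F by (simp add: field_simps)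
    then show ?thesis
      using True F \<open>real (n choose i) > 0\<close> unfolding i(2) by (simp add: field_simps)
  next
    case False
    then show ?thesis by (simp add: falling_fact_of_nat)
  qed
qed

lemma weight_diagonal_ptrace_dicke_moment:
  assumes "k \<le> n"
  shows "weight_diagonal k (ptrace n k (dicke_mixture n lam))
           (\<lambda>w. dicke_moment n k lam w / falling_fact (real n) k)"
  unfolding weight_diagonal_def
proof (intro ballI)
  fix s t assume st: "s \<in> bits k" "t \<in> bits k"
  then have "weight s \<le> k"
    using length_filter_le[of id s] by (simp add: bits_def weight_def)
  moreover have "ptrace n k (dicke_mixture n lam) s t = (if weight s = weight t then of_real
      (\<Sum>i = 0..n. lam i * (if weight s \<le> i then real ((n - k) choose (i - weight s)) else 0)
                     / real (n choose i)) else 0)"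
    using weight_diagonal_ptrace_dicke_mixture[OF assms, of lam] st by (simp add: weight_diagonal_def)
  ultimately show "ptrace n k (dicke_mixture n lam) s t = (if weight s = weight t
      then of_real (dicke_moment n k lam (weight s) / falling_fact (real n) k) else 0)"
    by (simp only: dicke_marginal_coefficient assms)
qed

lemma binary_quadratic_form_nonneg_iff:
  fixes A B C :: real
  shows "(\<forall>X Y. A * X\<^sup>2 + 2 * B * X * Y + C * Y\<^sup>2 \<ge> 0) \<longleftrightarrow> A \<ge> 0 \<and> C \<ge> 0 \<and> B\<^sup>2 \<le> A * C"
proof
  assume h: "\<forall>X Y. A * X\<^sup>2 + 2 * B * X * Y + C * Y\<^sup>2 \<ge> 0"
  have A: "A \<ge> 0" and C: "C \<ge> 0"
    using h[rule_format, of 1 0] h[rule_format, of 0 1] by simp_all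
  moreover have "B\<^sup>2 \<le> A * C"
  proof -
    have "A * (A * C - B\<^sup>2) \<ge> 0" "C * (A * C - B\<^sup>2) \<ge> 0"
      using h[rule_format, of B "-A"] h[rule_format, of "-C" B]
      by (simp_all add: algebra_simps power2_eq_square)
    moreover have "B = 0" if "A = 0" "C = 0"
      using h[rule_format, of 1 "-B"] that by (auto simp: power2_eq_square mult_le_0_iff)
    ultimately show ?thesis
      using A C by (cases "A > 0"; cases "C > 0") (auto simp: zero_le_mult_iff)
  qed
  ultimately show "A \<ge> 0 \<and> C \<ge> 0 \<and> B\<^sup>2 \<le> A * C" by simp
next
  assume h: "A \<ge> 0 \<and> C \<ge> 0 \<and> B\<^sup>2 \<le> A * C"
  show "\<forall>X Y. A * X\<^sup>2 + 2 * B * X * Y + C * Y\<^sup>2 \<ge> 0"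
  proof (intro allI)
    fix X Y :: real
    show "A * X\<^sup>2 + 2 * B * X * Y + C * Y\<^sup>2 \<ge> 0"
    proof (cases "A = 0")
      case True
      then have "B = 0" using h by simp
      then show ?thesis using True h by simp
    next
      case False
      have "A * (A * X\<^sup>2 + 2 * B * X * Y + C * Y\<^sup>2) = (A * X + B * Y)\<^sup>2 + (A * C - B\<^sup>2) * Y\<^sup>2"
        by (simp add: algebra_simps power2_eq_square)
      also have "\<dots> \<ge> 0" using h by simp
      finally show ?thesis using False h by (simp add: zero_le_mult_iff)
    qed
  qed
qed

definition binary_hermitian_form :: "real \<Rightarrow> real \<Rightarrow> real \<Rightarrow> complex \<Rightarrow> complex \<Rightarrow> complex" where
  "binary_hermitian_form A B C x y = A * cnj x * x + B * (cnj x * y + cnj y * x) + C * cnj y * y"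

lemma binary_hermitian_form_nonneg:
  assumes "A \<ge> 0" "C \<ge> 0" "B\<^sup>2 \<le> A * C"
  shows "Im (binary_hermitian_form A B C x y) = 0 \<and> Re (binary_hermitian_form A B C x y) \<ge> 0"
proof
  show "Im (binary_hermitian_form A B C x y) = 0"
    by (simp add: binary_hermitian_form_def algebra_simps)
  have real_form_nonneg: "\<forall>X Y. A * X\<^sup>2 + 2 * B * X * Y + C * Y\<^sup>2 \<ge> 0"
    using assms binary_quadratic_form_nonneg_iff by blast
  have "Re (binary_hermitian_form A B C x y)
      = (A * (Re x)\<^sup>2 + 2 * B * Re x * Re y + C * (Re y)\<^sup>2) + (A * (Im x)\<^sup>2 + 2 * B * Im x * Im y + C * (Im y)\<^sup>2)"
    by (simp add: binary_hermitian_form_def algebra_simps power2_eq_square)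
  also have "\<dots> \<ge> 0"
    using real_form_nonneg by (simp add: add_nonneg_nonneg)
  finally show "Re (binary_hermitian_form A B C x y) \<ge> 0" .
qed

lemma of_real_mult_cnj_self_nonneg:
  "c \<ge> 0 \<Longrightarrow> Im (of_real c * cnj x * x) = 0 \<and> Re (of_real c * cnj x * x) \<ge> 0"
  by (simp add: algebra_simps)

lemma bits_2: "bits 2 = {[False, False], [False, True], [True, False], [True, True]}"
  by (auto simp: bits_def length_Suc_conv numeral_2_eq_2)

lemma bits_3: "bits 3 = {[False, False, False], [False, False, True], [False, True, False], [False, True, True],
   [True, False, False], [True, False, True], [True, True, False], [True, True, True]}"
  by (auto simp: bits_def length_Suc_conv numeral_3_eq_3)

lemma PPT_2_weight_diagonal_iff:
  assumes diag: "weight_diagonal 2 \<sigma> a"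
    and nonneg: "a 0 \<ge> 0" "a 1 \<ge> 0" "a 2 \<ge> 0"
  shows "PPT 2 \<sigma> \<longleftrightarrow> (a 1)\<^sup>2 \<le> a 0 * a 2"
proof -
  have entries: "\<sigma> s t = (if weight s = weight t then of_real (a (weight s)) else 0)"
    if "length s = 2" "length t = 2" for s t
    using diag that by (simp add: weight_diagonal_def bits_def)
  have form: "(\<Sum>s \<in> bits 2. \<Sum>t \<in> bits 2. cnj (v s) * ptranspose 1 \<sigma> s t * v t) =
     binary_hermitian_form (a 0) (a 1) (a 2) (v [False, False]) (v [True, True])
     + of_real (a 1) * cnj (v [False, True]) * v [False, True]
     + of_real (a 1) * cnj (v [True, False]) * v [True, False]" for v
    unfolding bits_2
    by (simp add: ptranspose_def entries binary_hermitian_form_def algebra_simps numeral_2_eq_2)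
  have "PPT 2 \<sigma> \<longleftrightarrow> psd 2 (ptranspose 1 \<sigma>)"
    by (simp add: PPT_def)
  also have "\<dots> \<longleftrightarrow> (a 1)\<^sup>2 \<le> a 0 * a 2"
  proof
    assume "psd 2 (ptranspose 1 \<sigma>)"
    then have psd: "Re (\<Sum>s \<in> bits 2. \<Sum>t \<in> bits 2. cnj (v s) * ptranspose 1 \<sigma> s t * v t) \<ge> 0" for v
      unfolding psd_def Let_def by simp
    have "a 0 * X\<^sup>2 + 2 * a 1 * X * Y + a 2 * Y\<^sup>2 \<ge> 0" for X Y
      using psd[of "\<lambda>s. if s = [False, False] then of_real X else if s = [True, True] then of_real Y else 0"]
      unfolding form by (simp add: binary_hermitian_form_def power2_eq_square algebra_simps)
    then show "(a 1)\<^sup>2 \<le> a 0 * a 2"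
      using binary_quadratic_form_nonneg_iff by blast
  next
    assume "(a 1)\<^sup>2 \<le> a 0 * a 2"
    then show "psd 2 (ptranspose 1 \<sigma>)"
      unfolding psd_def Let_def form
      using binary_hermitian_form_nonneg of_real_mult_cnj_self_nonneg nonneg by simp
  qed
  finally show ?thesis .
qed

lemma PPT_3_weight_diagonal_iff:
  assumes diag: "weight_diagonal 3 \<sigma> a"
    and nonneg: "a 0 \<ge> 0" "a 1 \<ge> 0" "a 2 \<ge> 0" "a 3 \<ge> 0"
  shows "PPT 3 \<sigma> \<longleftrightarrow> (a 1)\<^sup>2 \<le> a 0 * a 2 \<and> (a 2)\<^sup>2 \<le> a 1 * a 3"
proof -
  have entries: "\<sigma> s t = (if weight s = weight t then of_real (a (weight s)) else 0)"
    if "length s = 3" "length t = 3" for s t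
    using diag that by (simp add: weight_diagonal_def bits_def)
  txt \<open>The transposed first qubit couples 000 with 101 and 110, and 111 with 001 and 010.\<close>
  have form: "(\<Sum>s \<in> bits 3. \<Sum>t \<in> bits 3. cnj (v s) * ptranspose 1 \<sigma> s t * v t) =
     binary_hermitian_form (a 0) (a 1) (a 2) (v [False, False, False]) (v [True, False, True] + v [True, True, False])
     + binary_hermitian_form (a 1) (a 2) (a 3) (v [False, False, True] + v [False, True, False]) (v [True, True, True])
     + of_real (a 1) * cnj (v [True, False, False]) * v [True, False, False]
     + of_real (a 2) * cnj (v [False, True, True]) * v [False, True, True]" for v
    unfolding bits_3
    by (simp add: ptranspose_def entries binary_hermitian_form_def algebra_simps numeral_2_eq_2 numeral_3_eq_3)
  have "PPT 3 \<sigma> \<longleftrightarrow> psd 3 (ptranspose 1 \<sigma>)"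
    by (simp add: PPT_def)
  also have "\<dots> \<longleftrightarrow> (a 1)\<^sup>2 \<le> a 0 * a 2 \<and> (a 2)\<^sup>2 \<le> a 1 * a 3"
  proof
    assume "psd 3 (ptranspose 1 \<sigma>)"
    then have psd: "Re (\<Sum>s \<in> bits 3. \<Sum>t \<in> bits 3. cnj (v s) * ptranspose 1 \<sigma> s t * v t) \<ge> 0" for v
      unfolding psd_def Let_def by simp
    have "a 0 * X\<^sup>2 + 2 * a 1 * X * Y + a 2 * Y\<^sup>2 \<ge> 0" for X Y
      using psd[of "\<lambda>s. if s = [False, False, False] then of_real X else if s = [True, False, True] then of_real Y else 0"]
      unfolding form by (simp add: binary_hermitian_form_def power2_eq_square algebra_simps)
    moreover have "a 1 * X\<^sup>2 + 2 * a 2 * X * Y + a 3 * Y\<^sup>2 \<ge> 0" for X Y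
      using psd[of "\<lambda>s. if s = [False, False, True] then of_real X else if s = [True, True, True] then of_real Y else 0"]
      unfolding form by (simp add: binary_hermitian_form_def power2_eq_square algebra_simps)
    ultimately show "(a 1)\<^sup>2 \<le> a 0 * a 2 \<and> (a 2)\<^sup>2 \<le> a 1 * a 3"
      using binary_quadratic_form_nonneg_iff by blast
  next
    assume "(a 1)\<^sup>2 \<le> a 0 * a 2 \<and> (a 2)\<^sup>2 \<le> a 1 * a 3"
    then show "psd 3 (ptranspose 1 \<sigma>)"
      unfolding psd_def Let_def form
      using binary_hermitian_form_nonneg of_real_mult_cnj_self_nonneg nonneg by simp
  qed
  finally show ?thesis .
qed

lemma divide_square_le_mult_iff:
  fixes x y z F :: real
  assumes "F > 0"
  shows "(y / F)\<^sup>2 \<le> (x / F) * (z / F) \<longleftrightarrow> x * z - y\<^sup>2 \<ge> 0"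
  using assms by (simp add: power_divide power2_eq_square divide_le_cancel)

lemma PPT_2_ptrace_dicke_mixture_iff:
  assumes "\<And>i. i \<le> n \<Longrightarrow> lam i \<ge> 0" "2 \<le> n"
  shows "PPT 2 (ptrace n 2 (dicke_mixture n lam)) \<longleftrightarrow>
    dicke_moment n 2 lam 0 * dicke_moment n 2 lam 2 - (dicke_moment n 2 lam 1)\<^sup>2 \<ge> 0"
proof -
  let ?M = "dicke_moment n 2 lam" and ?F = "falling_fact (real n) 2"
  have F: "?F > 0"
    using assms(2) by (simp add: falling_fact_of_nat)
  have "PPT 2 (ptrace n 2 (dicke_mixture n lam)) \<longleftrightarrow> (?M 1 / ?F)\<^sup>2 \<le> (?M 0 / ?F) * (?M 2 / ?F)"
    by (rule PPT_2_weight_diagonal_iff[OF weight_diagonal_ptrace_dicke_moment[OF assms(2)]])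
      (simp_all add: divide_nonneg_pos F dicke_moment_nonneg[OF assms(1)])
  also have "\<dots> \<longleftrightarrow> ?M 0 * ?M 2 - (?M 1)\<^sup>2 \<ge> 0"
    by (rule divide_square_le_mult_iff[OF F])
  finally show ?thesis .
qed

lemma PPT_3_ptrace_dicke_mixture_iff:
  assumes "\<And>i. i \<le> n \<Longrightarrow> lam i \<ge> 0" "3 \<le> n"
  shows "PPT 3 (ptrace n 3 (dicke_mixture n lam)) \<longleftrightarrow>
    dicke_moment n 3 lam 0 * dicke_moment n 3 lam 2 - (dicke_moment n 3 lam 1)\<^sup>2 \<ge> 0 \<and>
    dicke_moment n 3 lam 1 * dicke_moment n 3 lam 3 - (dicke_moment n 3 lam 2)\<^sup>2 \<ge> 0"
proof -
  let ?M = "dicke_moment n 3 lam" and ?F = "falling_fact (real n) 3"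
  have F: "?F > 0"
    using assms(2) by (simp add: falling_fact_of_nat)
  have "PPT 3 (ptrace n 3 (dicke_mixture n lam)) \<longleftrightarrow> (?M 1 / ?F)\<^sup>2 \<le> (?M 0 / ?F) * (?M 2 / ?F) \<and> (?M 2 / ?F)\<^sup>2 \<le> (?M 1 / ?F) * (?M 3 / ?F)"
    by (rule PPT_3_weight_diagonal_iff[OF weight_diagonal_ptrace_dicke_moment[OF assms(2)]])
      (simp_all add: divide_nonneg_pos F dicke_moment_nonneg[OF assms(1)])
  also have "\<dots> \<longleftrightarrow> ?M 0 * ?M 2 - (?M 1)\<^sup>2 \<ge> 0 \<and> ?M 1 * ?M 3 - (?M 2)\<^sup>2 \<ge> 0"
    by (simp only: divide_square_le_mult_iff[OF F])
  finally show ?thesis .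
qed

theorem mainTheorem14:
  fixes n :: nat and lam :: "nat \<Rightarrow> real"
  assumes nonneg: "\<And>i. i \<le> n \<Longrightarrow> lam i \<ge> 0"
    and sum1: "(\<Sum>i = 0..n. lam i) = 1"
  shows "(n \<ge> 2 \<longrightarrow>
           (PPT 2 (ptrace n 2 (dicke_mixture n lam)) \<longleftrightarrow>
             (\<Sum>i = 0..n. (real n - real i) * (real n - real i - 1) * lam i)
             * (\<Sum>i = 0..n. real i * (real i - 1) * lam i)
             - (\<Sum>i = 0..n. real i * (real n - real i) * lam i)^2 \<ge> 0))
       \<and> (n \<ge> 3 \<longrightarrow>
           (PPT 3 (ptrace n 3 (dicke_mixture n lam)) \<longleftrightarrow>
             ((\<Sum>i = 0..n. (real n - real i) * (real n - real i - 1) * (real n - real i - 2) * lam i)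
              * (\<Sum>i = 0..n. real i * (real i - 1) * (real n - real i) * lam i)
              - (\<Sum>i = 0..n. real i * (real n - real i) * (real n - real i - 1) * lam i)^2 \<ge> 0
             \<and> (\<Sum>i = 0..n. real i * (real n - real i) * (real n - real i - 1) * lam i)
              * (\<Sum>i = 0..n. real i * (real i - 1) * (real i - 2) * lam i)
              - (\<Sum>i = 0..n. real i * (real i - 1) * (real n - real i) * lam i)^2 \<ge> 0)))"
  using PPT_2_ptrace_dicke_mixture_iff[OF nonneg] PPT_3_ptrace_dicke_mixture_iff[OF nonneg]
  by (simp add: dicke_moment_def eval_nat_numeral algebra_simps)

end
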